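(* Let $\Omega\subset\mathbb{R}^n$ be a bounded open set and let $u$ be a viscosity subsolution of $\frac{\Delta_\infty u}{|Du|^2}=1$ in $\Omega$. Then there does not exist a nonempty open set $V\subset\Omega$ such that $u$ is constant on $V$.
   Context: $\Delta_\infty u=\sum_{i,j=1}^n u_{x_i}u_{x_j}u_{x_ix_j}$. $u$ is a viscosity subsolution of $\frac{\Delta_\infty u}{|Du|^2}=1$ in $\Omega$ if $u$ is upper semicontinuous and whenever $\phi\in C^2(\Omega)$ and $u-\phi$ has a local maximum at $x\in\Omega$, then $\frac{\Delta_\infty\phi(x)}{|D\phi(x)|^2}\ge 1$ if $D\phi(x)\neq0$, and $\max_{|p|=1}p\cdot D^2\phi(x)\,p\ge1$ if $D\phi(x)=0$. *)

theory Defs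
  imports "HOL-Analysis.Analysis"
begin

definition usc_on :: "('a::topological_space) set \<Rightarrow> ('a \<Rightarrow> real) \<Rightarrow> bool" where
  "usc_on \<Omega> u \<longleftrightarrow> (\<forall>x\<in>\<Omega>. \<forall>t. u x < t \<longrightarrow> eventually (\<lambda>y. u y < t) (at x within \<Omega>))"

definition C2_with :: "(real^'n) set \<Rightarrow> (real^'n \<Rightarrow> real) \<Rightarrow> (real^'n \<Rightarrow> real^'n)
    \<Rightarrow> (real^'n \<Rightarrow> real^'n^'n) \<Rightarrow> bool" where
  "C2_with \<Omega> phi Dphi D2phi \<longleftrightarrow>
     (\<forall>x\<in>\<Omega>. (phi has_derivative (\<lambda>h. Dphi x \<bullet> h)) (at x)) \<and>
     (\<forall>x\<in>\<Omega>. (Dphi has_derivative (\<lambda>h. D2phi x *v h)) (at x)) \<and>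
     continuous_on \<Omega> D2phi"

definition inf_lap :: "real^'n \<Rightarrow> real^'n^'n \<Rightarrow> real" where
  "inf_lap p M = (\<Sum>i\<in>UNIV. \<Sum>j\<in>UNIV. p$i * p$j * M$i$j)"

definition local_max_at :: "(real^'n) set \<Rightarrow> (real^'n \<Rightarrow> real) \<Rightarrow> real^'n \<Rightarrow> bool" where
  "local_max_at \<Omega> f x \<longleftrightarrow> (\<exists>e>0. \<forall>y\<in>\<Omega> \<inter> ball x e. f y \<le> f x)"

definition visc_sub :: "(real^'n) set \<Rightarrow> (real^'n \<Rightarrow> real) \<Rightarrow> bool" where
  "visc_sub \<Omega> u \<longleftrightarrow> usc_on \<Omega> u \<and>
     (\<forall>phi Dphi D2phi x. C2_with \<Omega> phi Dphi D2phi \<and> x \<in> \<Omega> \<and>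
        local_max_at \<Omega> (\<lambda>y. u y - phi y) x \<longrightarrow>
        (if Dphi x \<noteq> 0 then inf_lap (Dphi x) (D2phi x) / (norm (Dphi x))\<^sup>2 \<ge> 1
         else (SUP p\<in>sphere 0 1. p \<bullet> (D2phi x *v p)) \<ge> 1))"

end

theory Submission
  imports Defs
begin

text \<open>If u were constant, equal to c, on a nonempty open V \<subseteq> \<Omega>, then the constant
  function c would touch u from above at every point of V. Its gradient vanishes, so the
  degenerate case of the definition applies, and there the zero Hessian would have to
  satisfy 0 \<ge> 1.\<close>

lemma C2_with_const: "C2_with \<Omega> (\<lambda>_. c) (\<lambda>_. 0) (\<lambda>_. 0)"
proof -
  have gradient: "(\<lambda>h. (0::real^'n) \<bullet> h) = (\<lambda>h. 0)"
    by simp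
  have hessian: "(\<lambda>h. (0::real^'n^'n) *v h) = (\<lambda>h. 0)"
    by (rule ext) (simp add: matrix_vector_mult_def vec_eq_iff)
  show ?thesis
    unfolding C2_with_def gradient hessian by simp
qed

lemma local_max_at_minus_const:
  assumes "e > 0" and "\<forall>y\<in>ball x e. u y = c"
  shows "local_max_at \<Omega> (\<lambda>y. u y - c) x"
  unfolding local_max_at_def using assms by (intro exI[of _ e]) auto

lemma visc_sub_not_local_max_minus_const:
  assumes "visc_sub \<Omega> u" and "x \<in> \<Omega>"
  shows "\<not> local_max_at \<Omega> (\<lambda>y. u y - c) x"
proof
  assume "local_max_at \<Omega> (\<lambda>y. u y - c) x"
  with assms C2_with_const[of \<Omega> c]
  have "(SUP p\<in>sphere 0 1. p \<bullet> ((0::real^'n^'n) *v p)) \<ge> 1"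
    unfolding visc_sub_def by fastforce
  moreover have "sphere (0::real^'n) 1 \<noteq> {}"
    by (simp add: sphere_eq_empty)
  ultimately show False
    by simp
qed

theorem lemma2p3:
  fixes \<Omega> :: "(real^'n) set" and u :: "real^'n \<Rightarrow> real"
  assumes "open \<Omega>" and "bounded \<Omega>" and "visc_sub \<Omega> u"
  shows "\<not> (\<exists>V. open V \<and> V \<noteq> {} \<and> V \<subseteq> \<Omega> \<and> (\<exists>c. \<forall>y\<in>V. u y = c))"
proof
  assume "\<exists>V. open V \<and> V \<noteq> {} \<and> V \<subseteq> \<Omega> \<and> (\<exists>c. \<forall>y\<in>V. u y = c)"
  then obtain V c x where "open V" "V \<subseteq> \<Omega>" "\<forall>y\<in>V. u y = c" "x \<in> V"
    by blast
  moreover from \<open>open V\<close> \<open>x \<in> V\<close> obtain e where "e > 0" "ball x e \<subseteq> V"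
    using open_contains_ball by blast
  ultimately have "local_max_at \<Omega> (\<lambda>y. u y - c) x" and "x \<in> \<Omega>"
    using local_max_at_minus_const[of e x u c \<Omega>] by auto
  with visc_sub_not_local_max_minus_const[OF assms(3)] show False
    by blast
qed

end
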